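(* There exists a unital, completely positive, idempotent linear map $\Phi:\ell^\infty(\mathbb Z)\to\ell^\infty(\mathbb Z)$ which is $\mathbb Z$-equivariant (i.e. $\Phi\circ B=B\circ\Phi$, where $(Bv)_n=v_{n+1}$ is the backward shift) and whose range is not a C*-subalgebra of $\ell^\infty(\mathbb Z)$.
   Context: $\ell^\infty(\mathbb Z)$ is the C*-algebra of bounded complex sequences indexed by $\mathbb Z$ with pointwise operations; $\mathbb Z$ acts on it by translation, generated by the backward shift $B$. *)

theory Defs
  imports "HOL-Analysis.Analysis"
begin

definition linf :: "(int \<Rightarrow> complex) set" where
  "linf = {f. \<exists>M. \<forall>n. norm (f n) \<le> M}"

definition bshift :: "(int \<Rightarrow> complex) \<Rightarrow> (int \<Rightarrow> complex)" where
  "bshift v = (\<lambda>n. v (n + 1))"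

definition linear_on_linf :: "((int \<Rightarrow> complex) \<Rightarrow> (int \<Rightarrow> complex)) \<Rightarrow> bool" where
  "linear_on_linf \<Phi> \<longleftrightarrow>
     (\<forall>x\<in>linf. \<Phi> x \<in> linf) \<and>
     (\<forall>x\<in>linf. \<forall>y\<in>linf. \<Phi> (\<lambda>n. x n + y n) = (\<lambda>n. \<Phi> x n + \<Phi> y n)) \<and>
     (\<forall>c::complex. \<forall>x\<in>linf. \<Phi> (\<lambda>n. c * x n) = (\<lambda>n. c * \<Phi> x n))"

text \<open>Positivity of an element of M_k(ell-infinity(Z)) = bounded M_k(C)-valued functions on Z
  (entries x i j, i,j < k): positive semidefinite at every point of Z.\<close>
definition mat_pos :: "nat \<Rightarrow> (nat \<Rightarrow> nat \<Rightarrow> int \<Rightarrow> complex) \<Rightarrow> bool" where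
  "mat_pos k x \<longleftrightarrow>
     (\<forall>m. \<forall>v :: nat \<Rightarrow> complex.
        Im (\<Sum>i<k. \<Sum>j<k. cnj (v i) * x i j m * v j) = 0 \<and>
        Re (\<Sum>i<k. \<Sum>j<k. cnj (v i) * x i j m * v j) \<ge> 0)"

definition completely_positive :: "((int \<Rightarrow> complex) \<Rightarrow> (int \<Rightarrow> complex)) \<Rightarrow> bool" where
  "completely_positive \<Phi> \<longleftrightarrow>
     (\<forall>k. \<forall>x :: nat \<Rightarrow> nat \<Rightarrow> int \<Rightarrow> complex.
        (\<forall>i<k. \<forall>j<k. x i j \<in> linf) \<longrightarrow> mat_pos k x \<longrightarrow> mat_pos k (\<lambda>i j. \<Phi> (x i j)))"

definition cstar_subalgebra :: "(int \<Rightarrow> complex) set \<Rightarrow> bool" where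
  "cstar_subalgebra S \<longleftrightarrow>
     S \<subseteq> linf \<and>
     (\<lambda>n. 0) \<in> S \<and>
     (\<forall>x\<in>S. \<forall>y\<in>S. (\<lambda>n. x n + y n) \<in> S) \<and>
     (\<forall>c::complex. \<forall>x\<in>S. (\<lambda>n. c * x n) \<in> S) \<and>
     (\<forall>x\<in>S. \<forall>y\<in>S. (\<lambda>n. x n * y n) \<in> S) \<and>
     (\<forall>x\<in>S. (\<lambda>n. cnj (x n)) \<in> S) \<and>
     (\<forall>s :: nat \<Rightarrow> int \<Rightarrow> complex. \<forall>f\<in>linf.
        (\<forall>k. s k \<in> S) \<and> (\<forall>e>0. \<exists>N. \<forall>k\<ge>N. \<forall>n. norm (s k n - f n) \<le> e) \<longrightarrow> f \<in> S)"

end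

theory Submission
  imports Defs
begin

(* Let p and q be ultrafilters on Z with p + q = p and q + p = q in beta Z. Then
   Phi x n = (p-lim_m x (n + m) + q-lim_m x (n + m)) / 2 is unital, completely positive and
   commutes with the shift, and the two relations make it idempotent. Such p and q exist by the
   Ellis-Numakura lemma, which gives idempotents in closed subsemigroups of beta Z. We take them
   3-adically convergent to 0, with p containing the integers whose lowest nonzero ternary digit
   is 1 and q those where it is 2. For the indicator x of the first set, y = Phi x is 1 on the
   first set and 0 on the second, and y 0 = 1/2. So Phi (y * y) 0 = 1/2, which is not y 0 * y 0.
   Since Phi fixes its range pointwise, y * y is not in the range. *)

section \<open>Ultrafilters\<close>

definition ultrafilter :: "'a filter \<Rightarrow> bool" where
  "ultrafilter F \<longleftrightarrow> F \<noteq> bot \<and> (\<forall>P. eventually P F \<or> eventually (\<lambda>x. \<not> P x) F)"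

lemma ultrafilter_iff:
  "ultrafilter F \<longleftrightarrow> (\<forall>P. eventually (\<lambda>x. \<not> P x) F \<longleftrightarrow> \<not> eventually P F)"
proof
  assume U: "ultrafilter F"
  show "\<forall>P. eventually (\<lambda>x. \<not> P x) F \<longleftrightarrow> \<not> eventually P F"
  proof (intro allI iffI notI)
    fix P assume "eventually (\<lambda>x. \<not> P x) F" "eventually P F"
    then have "eventually (\<lambda>x. False) F" by (rule eventually_elim2) simp
    with U show False by (simp add: ultrafilter_def)
  qed (use U in \<open>auto simp: ultrafilter_def\<close>)
next
  assume neg: "\<forall>P. eventually (\<lambda>x. \<not> P x) F \<longleftrightarrow> \<not> eventually P F"
  then have "\<not> eventually (\<lambda>x. False) F" using neg[rule_format, of "\<lambda>x. True"] by simp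
  then have "F \<noteq> bot" by auto
  with neg show "ultrafilter F" unfolding ultrafilter_def by blast
qed

lemma ultrafilter_not_bot: "ultrafilter F \<Longrightarrow> F \<noteq> bot"
  by (simp add: ultrafilter_def)

lemma ultrafilter_eventually_not:
  "ultrafilter F \<Longrightarrow> eventually (\<lambda>x. \<not> P x) F \<longleftrightarrow> \<not> eventually P F"
  by (simp add: ultrafilter_iff)

lemma ultrafilter_filtermap: "ultrafilter F \<Longrightarrow> ultrafilter (filtermap f F)"
  by (simp add: ultrafilter_iff eventually_filtermap)

lemma ultrafilter_le_imp_eq:
  assumes "ultrafilter G" "F \<noteq> bot" "F \<le> G"
  shows "F = G"
proof (rule antisym[OF assms(3)], rule filter_leI)
  fix P assume "eventually P F"
  show "eventually P G"
  proof (rule ccontr)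
    assume "\<not> eventually P G"
    then have "eventually (\<lambda>x. \<not> P x) F"
      using assms(1,3) ultrafilter_eventually_not filter_leD by blast
    with \<open>eventually P F\<close> have "eventually (\<lambda>x. False) F"
      by (rule eventually_elim2) simp
    with assms(2) show False by simp
  qed
qed

lemma ultrafilter_if_maximal:
  assumes "U \<noteq> bot" "\<And>G. G \<noteq> bot \<Longrightarrow> G \<le> U \<Longrightarrow> G = U"
  shows "ultrafilter U"
  unfolding ultrafilter_def
proof (intro conjI allI disjCI)
  fix P assume "\<not> eventually (\<lambda>x. \<not> P x) U"
  then have "inf U (principal {x. P x}) \<noteq> bot"
    by (auto simp: trivial_limit_def eventually_inf_principal)
  then have "inf U (principal {x. P x}) = U" using assms(2) by simp
  moreover have "eventually P (inf U (principal {x. P x}))" by (simp add: eventually_inf_principal)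
  ultimately show "eventually P U" by simp
qed (rule assms(1))

lemma exists_ultrafilter_le:
  assumes "F \<noteq> bot"
  obtains U where "ultrafilter U" "U \<le> F"
proof -
  define A where "A = {G. G \<noteq> bot \<and> G \<le> F}"
  have "\<exists>U\<in>A. \<forall>G\<in>A. G \<le> U \<longrightarrow> G = U"
  proof (rule predicate_Zorn)
    show "partial_order_on A (relation_of (\<lambda>G H. H \<le> G) A)"
      by (rule partial_order_on_relation_ofI) auto
  next
    fix C assume C: "C \<in> Chains (relation_of (\<lambda>G H. H \<le> G) A)"
    show "\<exists>U\<in>A. \<forall>G\<in>C. G \<ge> U"
    proof (cases "C = {}")
      case True
      then show ?thesis using assms by (auto simp: A_def)
    next
      case False
      have CA: "C \<subseteq> A" using Chains_relation_of[OF C] .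
      have total: "G \<le> H \<or> H \<le> G" if "G \<in> C" "H \<in> C" for G H
        using C that unfolding Chains_def relation_of_def by blast
      have "(INF G\<in>C. G) \<noteq> bot"
      proof -
        have "\<exists>K\<in>C. K \<le> inf G H" if "G \<in> C" "H \<in> C" for G H
          using total[OF that] that by (meson le_inf_iff order_refl)
        then show ?thesis using INF_filter_bot_base[of C id] CA by (auto simp: A_def)
      qed
      moreover obtain G where "G \<in> C" using False by blast
      then have "(INF G\<in>C. G) \<le> F" using CA by (auto simp: A_def intro: Inf_lower2)
      ultimately have "(INF G\<in>C. G) \<in> A" by (simp add: A_def)
      then show ?thesis by (auto intro: INF_lower)
    qed
  qed
  then obtain U where U: "U \<in> A" and max: "\<And>G. G \<in> A \<Longrightarrow> G \<le> U \<Longrightarrow> G = U" by blast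
  have "ultrafilter U"
  proof (rule ultrafilter_if_maximal)
    show "U \<noteq> bot" using U by (simp add: A_def)
    show "G = U" if "G \<noteq> bot" "G \<le> U" for G
      using that U by (intro max) (auto simp: A_def)
  qed
  with U show ?thesis using that by (auto simp: A_def)
qed

lemma tendsto_ultrafilter_compact:
  assumes "ultrafilter F" "compact K" "eventually (\<lambda>x. f x \<in> K) F"
  obtains c where "c \<in> K" "(f \<longlongrightarrow> c) F"
proof -
  have "filtermap f F \<noteq> bot" using ultrafilter_not_bot[OF assms(1)] by (simp add: filtermap_bot_iff)
  then obtain c where c: "c \<in> K" "inf (nhds c) (filtermap f F) \<noteq> bot"
    using assms(2,3) unfolding compact_filter by (auto simp: eventually_filtermap)
  have "inf (nhds c) (filtermap f F) = filtermap f F"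
    using ultrafilter_le_imp_eq[OF ultrafilter_filtermap[OF assms(1)] c(2)] by simp
  then have "(f \<longlongrightarrow> c) F" unfolding filterlim_def by (metis inf.orderI inf_commute)
  with c(1) show ?thesis using that by blast
qed

lemma Lim_ultrafilter: "ultrafilter F \<Longrightarrow> (f \<longlongrightarrow> c) F \<Longrightarrow> Lim F f = c"
  by (rule tendsto_Lim) (simp add: ultrafilter_not_bot)

lemma tendsto_Lim_ultrafilter:
  fixes f :: "'a \<Rightarrow> 'b::heine_borel"
  assumes "ultrafilter F" "bounded (range f)"
  shows "(f \<longlongrightarrow> Lim F f) F"
proof -
  have "eventually (\<lambda>x. f x \<in> closure (range f)) F"
    by (simp add: closure_subset[THEN subsetD])
  then obtain c where "(f \<longlongrightarrow> c) F"
    using tendsto_ultrafilter_compact[OF assms(1), of "closure (range f)" f] assms(2) by auto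
  moreover from this have "Lim F f = c" by (rule Lim_ultrafilter[OF assms(1)])
  ultimately show ?thesis by simp
qed

section \<open>Closed sets of ultrafilters\<close>

definition ultrafilters_below :: "'a filter \<Rightarrow> 'a filter set" where
  "ultrafilters_below F = {U. ultrafilter U \<and> U \<le> F}"

text \<open>Closed sets of the Stone space of ultrafilters: the closure of \<open>S\<close> consists of the
  ultrafilters below \<open>Sup S\<close>, i.e. those containing every set that belongs to all members of \<open>S\<close>.\<close>

definition ultrafilter_closed :: "'a filter set \<Rightarrow> bool" where
  "ultrafilter_closed S \<longleftrightarrow> (\<forall>U. U \<in> S \<longleftrightarrow> ultrafilter U \<and> U \<le> Sup S)"

lemma ultrafilter_closedI:
  "(\<And>U. U \<in> S \<Longrightarrow> ultrafilter U) \<Longrightarrow> (\<And>U. ultrafilter U \<Longrightarrow> U \<le> Sup S \<Longrightarrow> U \<in> S)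
    \<Longrightarrow> ultrafilter_closed S"
  unfolding ultrafilter_closed_def by (blast intro: Sup_upper)

lemma ultrafilter_closed_eq: "ultrafilter_closed S \<Longrightarrow> U \<in> S \<longleftrightarrow> ultrafilter U \<and> U \<le> Sup S"
  unfolding ultrafilter_closed_def by blast

lemma ultrafilter_closed_iff: "ultrafilter_closed S \<longleftrightarrow> S = ultrafilters_below (Sup S)"
  by (auto simp: ultrafilter_closed_def ultrafilters_below_def)

lemma ultrafilter_closedD:
  "ultrafilter_closed S \<Longrightarrow> ultrafilter U \<Longrightarrow> U \<le> Sup S \<Longrightarrow> U \<in> S"
  by (simp add: ultrafilter_closed_eq)

lemma ultrafilter_closed_imp_ultrafilter: "ultrafilter_closed S \<Longrightarrow> U \<in> S \<Longrightarrow> ultrafilter U"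
  by (simp add: ultrafilter_closed_eq)

lemma ultrafilter_closed_ultrafilters_below: "ultrafilter_closed (ultrafilters_below F)"
proof (rule ultrafilter_closedI)
  fix U assume "ultrafilter U" "U \<le> Sup (ultrafilters_below F)"
  moreover have "Sup (ultrafilters_below F) \<le> F"
    by (rule Sup_least) (simp add: ultrafilters_below_def)
  ultimately show "U \<in> ultrafilters_below F" by (simp add: ultrafilters_below_def)
qed (simp add: ultrafilters_below_def)

lemma ultrafilters_below_eq_empty_iff: "ultrafilters_below F = {} \<longleftrightarrow> F = bot"
proof
  assume "ultrafilters_below F = {}"
  then show "F = bot" using exists_ultrafilter_le[of F] by (auto simp: ultrafilters_below_def)
qed (auto simp: ultrafilters_below_def bot_unique dest: ultrafilter_not_bot)

lemma INT_ultrafilters_below: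
  "I \<noteq> {} \<Longrightarrow> (\<Inter>i\<in>I. ultrafilters_below (F i)) = ultrafilters_below (INF i\<in>I. F i)"
  by (auto simp: ultrafilters_below_def le_INF_iff)

lemma ultrafilter_closed_eq_INT:
  assumes "\<And>S. S \<in> \<C> \<Longrightarrow> ultrafilter_closed S"
  shows "\<Inter>\<C> = (\<Inter>S\<in>\<C>. ultrafilters_below (Sup S))"
  using assms unfolding ultrafilter_closed_def ultrafilters_below_def by blast

lemma ultrafilter_closed_Inter:
  assumes "\<C> \<noteq> {}" "\<And>S. S \<in> \<C> \<Longrightarrow> ultrafilter_closed S"
  shows "ultrafilter_closed (\<Inter>\<C>)"
proof -
  have "\<Inter>\<C> = ultrafilters_below (INF S\<in>\<C>. Sup S)"
    using assms by (simp add: ultrafilter_closed_eq_INT INT_ultrafilters_below)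
  then show ?thesis by (simp add: ultrafilter_closed_ultrafilters_below)
qed

lemma ultrafilter_closed_chain_Inter_nonempty:
  assumes "\<C> \<noteq> {}" "\<And>S. S \<in> \<C> \<Longrightarrow> ultrafilter_closed S \<and> S \<noteq> {}"
    and "\<And>S T. S \<in> \<C> \<Longrightarrow> T \<in> \<C> \<Longrightarrow> S \<subseteq> T \<or> T \<subseteq> S"
  shows "\<Inter>\<C> \<noteq> {}"
proof -
  have "\<exists>R\<in>\<C>. Sup R \<le> inf (Sup S) (Sup T)" if "S \<in> \<C>" "T \<in> \<C>" for S T
    using assms(3)[OF that] that by (meson Sup_subset_mono le_inf_iff order_refl)
  moreover have "Sup S \<noteq> bot" if S: "S \<in> \<C>" for S
  proof -
    obtain U where "U \<in> S" using assms(2)[OF S] by blast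
    moreover have "U \<noteq> bot"
      using assms(2)[OF S] \<open>U \<in> S\<close> ultrafilter_closed_imp_ultrafilter ultrafilter_not_bot by blast
    ultimately show ?thesis by auto
  qed
  ultimately have "(INF S\<in>\<C>. Sup S) \<noteq> bot" using INF_filter_bot_base[of \<C> Sup] by blast
  moreover have "\<Inter>\<C> = ultrafilters_below (INF S\<in>\<C>. Sup S)"
    using assms(1,2) by (simp add: ultrafilter_closed_eq_INT INT_ultrafilters_below)
  ultimately show ?thesis by (simp add: ultrafilters_below_eq_empty_iff)
qed

lemma ultrafilter_closed_minimal:
  assumes "Q S" and "\<And>T. Q T \<Longrightarrow> ultrafilter_closed T \<and> T \<noteq> {}"
    and "\<And>\<C>. \<C> \<noteq> {} \<Longrightarrow> (\<And>T. T \<in> \<C> \<Longrightarrow> Q T) \<Longrightarrow> (\<And>T T'. T \<in> \<C> \<Longrightarrow> T' \<in> \<C> \<Longrightarrow> T \<subseteq> T' \<or> T' \<subseteq> T)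
      \<Longrightarrow> ultrafilter_closed (\<Inter>\<C>) \<Longrightarrow> \<Inter>\<C> \<noteq> {} \<Longrightarrow> Q (\<Inter>\<C>)"
  obtains M where "M \<subseteq> S" "Q M" "\<And>T. T \<subseteq> M \<Longrightarrow> Q T \<Longrightarrow> T = M"
proof -
  define A where "A = {T. T \<subseteq> S \<and> Q T}"
  have "\<exists>M\<in>A. \<forall>T\<in>A. T \<subseteq> M \<longrightarrow> T = M"
  proof (rule predicate_Zorn)
    show "partial_order_on A (relation_of (\<lambda>T T'. T' \<subseteq> T) A)"
      by (rule partial_order_on_relation_ofI) auto
  next
    fix C assume C: "C \<in> Chains (relation_of (\<lambda>T T'. T' \<subseteq> T) A)"
    show "\<exists>M\<in>A. \<forall>T\<in>C. M \<subseteq> T"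
    proof (cases "C = {}")
      case True
      then show ?thesis using assms(1) by (auto simp: A_def)
    next
      case False
      have CA: "C \<subseteq> A" using Chains_relation_of[OF C] .
      have total: "T \<subseteq> T' \<or> T' \<subseteq> T" if "T \<in> C" "T' \<in> C" for T T'
        using C that unfolding Chains_def relation_of_def by blast
      have "\<Inter>C \<noteq> {}"
        using False CA assms(2) total by (intro ultrafilter_closed_chain_Inter_nonempty) (auto simp: A_def)
      moreover have "ultrafilter_closed (\<Inter>C)"
        using False CA assms(2) by (intro ultrafilter_closed_Inter) (auto simp: A_def)
      ultimately have "Q (\<Inter>C)" using False CA total by (intro assms(3)) (auto simp: A_def)
      then have "\<Inter>C \<in> A" using False CA by (auto simp: A_def)
      then show ?thesis by blast
    qed
  qed
  then obtain M where M: "M \<in> A" and max: "\<And>T. T \<in> A \<Longrightarrow> T \<subseteq> M \<Longrightarrow> T = M" by blast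
  show ?thesis
  proof (rule that)
    show "M \<subseteq> S" "Q M" using M by (auto simp: A_def)
    fix T assume "T \<subseteq> M" "Q T"
    then show "T = M" using max M by (auto simp: A_def)
  qed
qed

section \<open>Addition of filters\<close>

text \<open>On ultrafilters this is the addition of the Stone-Cech compactification: a set \<open>A\<close> belongs
  to \<open>F \<oplus> G\<close> iff \<open>{x. A - x \<in> G} \<in> F\<close>. It is continuous in the left argument only.\<close>

definition filter_add :: "'a::plus filter \<Rightarrow> 'a filter \<Rightarrow> 'a filter" (infixl "\<oplus>" 65) where
  "F \<oplus> G = Abs_filter (\<lambda>P. \<forall>\<^sub>F x in F. \<forall>\<^sub>F y in G. P (x + y))"

lemma eventually_filter_add: "eventually P (F \<oplus> G) \<longleftrightarrow> (\<forall>\<^sub>F x in F. \<forall>\<^sub>F y in G. P (x + y))"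
  unfolding filter_add_def
proof (rule eventually_Abs_filter, unfold_locales)
  fix P Q
  assume "\<forall>\<^sub>F x in F. \<forall>\<^sub>F y in G. P (x + y)" "\<forall>\<^sub>F x in F. \<forall>\<^sub>F y in G. Q (x + y)"
  then show "\<forall>\<^sub>F x in F. \<forall>\<^sub>F y in G. P (x + y) \<and> Q (x + y)"
    by (rule eventually_elim2) (rule eventually_conj)
next
  fix P Q assume PQ: "\<forall>x. P x \<longrightarrow> Q x" and "\<forall>\<^sub>F x in F. \<forall>\<^sub>F y in G. P (x + y)"
  from this(2) show "\<forall>\<^sub>F x in F. \<forall>\<^sub>F y in G. Q (x + y)"
    by (rule eventually_mono) (auto elim: eventually_mono simp: PQ)
qed simp

lemma ultrafilter_filter_add: "ultrafilter F \<Longrightarrow> ultrafilter G \<Longrightarrow> ultrafilter (F \<oplus> G)"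
  by (simp add: ultrafilter_iff eventually_filter_add)

lemma filter_add_assoc: "(F \<oplus> G) \<oplus> H = F \<oplus> (G \<oplus> H :: 'a::semigroup_add filter)"
  by (simp add: filter_eq_iff eventually_filter_add add.assoc)

lemma filter_add_mono_left: "F \<le> F' \<Longrightarrow> F \<oplus> G \<le> F' \<oplus> G"
  by (auto simp: le_filter_def eventually_filter_add)

lemma Lim_filter_add:
  fixes x :: "'a::plus \<Rightarrow> 'b::heine_borel"
  assumes F: "ultrafilter F" and G: "ultrafilter G" and x: "bounded (range x)"
  shows "Lim (F \<oplus> G) x = Lim F (\<lambda>a. Lim G (\<lambda>b. x (a + b)))"
proof -
  define y where "y a = Lim G (\<lambda>b. x (a + b))" for a
  have y: "((\<lambda>b. x (a + b)) \<longlongrightarrow> y a) G" for a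
    unfolding y_def by (rule tendsto_Lim_ultrafilter[OF G bounded_subset[OF x]]) auto
  have "y a \<in> closure (range x)" for a
    using G by (intro Lim_in_closed_set[OF closed_closure _ _ y]) (auto simp: ultrafilter_not_bot closure_subset[THEN subsetD])
  then have "bounded (range y)" using bounded_closure[OF x] by (auto intro: bounded_subset)
  then have y_lim: "(y \<longlongrightarrow> Lim F y) F" by (rule tendsto_Lim_ultrafilter[OF F])
  have "(x \<longlongrightarrow> Lim F y) (F \<oplus> G)"
  proof (rule tendstoI)
    fix e :: real assume "e > 0"
    then have e2: "e / 2 > 0" by simp
    have "\<forall>\<^sub>F a in F. dist (y a) (Lim F y) < e / 2" using tendstoD[OF y_lim e2] .
    then show "\<forall>\<^sub>F c in F \<oplus> G. dist (x c) (Lim F y) < e"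
      unfolding eventually_filter_add
    proof (rule eventually_mono)
      fix a assume "dist (y a) (Lim F y) < e / 2"
      moreover have "\<forall>\<^sub>F b in G. dist (x (a + b)) (y a) < e / 2" using tendstoD[OF y e2] .
      ultimately show "\<forall>\<^sub>F b in G. dist (x (a + b)) (Lim F y) < e"
        by (elim eventually_mono) (rule dist_triangle_half_r, simp add: dist_commute)
    qed
  qed
  then show ?thesis unfolding y_def by (rule Lim_ultrafilter[OF ultrafilter_filter_add[OF F G]])
qed

lemma filter_add_right_preimage_ne_bot:
  assumes p: "ultrafilter p" and U: "ultrafilter U" "U \<le> F \<oplus> p"
  shows "(INF P\<in>{P. eventually P U}. inf F (principal {x. \<forall>\<^sub>F y in p. P (x + y)})) \<noteq> bot"
proof -
  define shifted where "shifted P = {x. \<forall>\<^sub>F y in p. P (x + y)}" for P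
  have "(INF P\<in>{P. eventually P U}. inf F (principal (shifted P))) \<noteq> bot"
  proof (subst INF_filter_bot_base)
    fix P Q assume "P \<in> {P. eventually P U}" "Q \<in> {P. eventually P U}"
    moreover have "shifted (\<lambda>x. P x \<and> Q x) \<subseteq> shifted P" "shifted (\<lambda>x. P x \<and> Q x) \<subseteq> shifted Q"
      by (auto simp: shifted_def elim: eventually_mono)
    ultimately show "\<exists>R\<in>{P. eventually P U}. inf F (principal (shifted R)) \<le>
        inf (inf F (principal (shifted P))) (inf F (principal (shifted Q)))"
      by (intro bexI[of _ "\<lambda>x. P x \<and> Q x"]) (auto intro: le_infI2 eventually_conj)
  next
    show "\<not> (\<exists>P\<in>{P. eventually P U}. inf F (principal (shifted P)) = bot)"
    proof
      assume "\<exists>P\<in>{P. eventually P U}. inf F (principal (shifted P)) = bot"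
      then obtain P where P: "eventually P U" "eventually (\<lambda>x. x \<notin> shifted P) F"
        by (auto simp: trivial_limit_def eventually_inf_principal)
      then have "\<forall>\<^sub>F x in F. \<forall>\<^sub>F y in p. \<not> P (x + y)"
        using p by (auto simp: shifted_def ultrafilter_eventually_not elim: eventually_mono)
      then have "eventually (\<lambda>x. \<not> P x) U"
        using U(2) by (auto simp: eventually_filter_add intro: filter_leD)
      with P(1) U(1) show False by (simp add: ultrafilter_eventually_not)
    qed
  qed
  then show ?thesis by (simp add: shifted_def)
qed

lemma filter_add_right_image:
  assumes p: "ultrafilter p"
  shows "(\<lambda>q. q \<oplus> p) ` ultrafilters_below F = ultrafilters_below (F \<oplus> p)"
proof (intro equalityI subsetI)
  fix U assume "U \<in> (\<lambda>q. q \<oplus> p) ` ultrafilters_below F"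
  then show "U \<in> ultrafilters_below (F \<oplus> p)"
    using p by (auto simp: ultrafilters_below_def ultrafilter_filter_add filter_add_mono_left)
next
  fix U assume "U \<in> ultrafilters_below (F \<oplus> p)"
  then have U: "ultrafilter U" "U \<le> F \<oplus> p" by (auto simp: ultrafilters_below_def)
  define shifted where "shifted P = {x. \<forall>\<^sub>F y in p. P (x + y)}" for P
  define G where "G = (INF P\<in>{P. eventually P U}. inf F (principal (shifted P)))"
  have "G \<noteq> bot"
    using filter_add_right_preimage_ne_bot[OF p U] by (simp add: G_def shifted_def)
  then obtain q where q: "ultrafilter q" "q \<le> G" by (rule exists_ultrafilter_le)
  have "q \<le> F"
    using q(2) by (rule order_trans) (auto simp: G_def intro: INF_lower2[of "\<lambda>x. True"])
  moreover have "q \<oplus> p \<le> U"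
  proof (rule filter_leI)
    fix P assume "eventually P U"
    then have "q \<le> principal (shifted P)"
      using q(2) by (rule_tac order_trans) (auto simp: G_def intro: INF_lower2)
    then show "eventually P (q \<oplus> p)"
      by (simp add: le_principal eventually_filter_add shifted_def)
  qed
  then have "q \<oplus> p = U"
    using q(1) p U(1) by (intro ultrafilter_le_imp_eq) (auto simp: ultrafilter_filter_add ultrafilter_not_bot)
  ultimately show "U \<in> (\<lambda>q. q \<oplus> p) ` ultrafilters_below F"
    using q(1) by (auto simp: ultrafilters_below_def)
qed

lemma ultrafilter_closed_add_right:
  assumes "ultrafilter_closed S" "ultrafilter p"
  shows "ultrafilter_closed ((\<lambda>q. q \<oplus> p) ` S)"
  using assms filter_add_right_image[of p "Sup S"]
  by (simp add: ultrafilter_closed_iff[of S] ultrafilter_closed_ultrafilters_below)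

lemma ultrafilter_closed_add_right_fixed:
  assumes S: "ultrafilter_closed S" and p: "ultrafilter p"
  shows "ultrafilter_closed {q\<in>S. q \<oplus> p = p}"
proof (rule ultrafilter_closedI)
  fix U assume U: "ultrafilter U" "U \<le> Sup {q\<in>S. q \<oplus> p = p}"
  have "Sup {q\<in>S. q \<oplus> p = p} \<le> Sup S" by (rule Sup_subset_mono) blast
  then have "U \<in> S" using ultrafilter_closedD[OF S U(1)] U(2) by (blast intro: order_trans)
  moreover have "U \<oplus> p \<le> p"
  proof (rule filter_leI)
    fix P assume "eventually P p"
    then have "eventually (\<lambda>x. \<forall>\<^sub>F y in p. P (x + y)) V" if "V \<in> {q\<in>S. q \<oplus> p = p}" for V
      using that by (auto simp: eventually_filter_add[symmetric])
    then have "eventually (\<lambda>x. \<forall>\<^sub>F y in p. P (x + y)) U"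
      using U(2) by (auto simp: eventually_Sup intro: filter_leD)
    then show "eventually P (U \<oplus> p)" by (simp add: eventually_filter_add)
  qed
  then have "U \<oplus> p = p"
    using U(1) p by (intro ultrafilter_le_imp_eq) (auto simp: ultrafilter_filter_add ultrafilter_not_bot)
  ultimately show "U \<in> {q\<in>S. q \<oplus> p = p}" by blast
qed (use S in \<open>auto simp: ultrafilter_closed_eq\<close>)

section \<open>Idempotent ultrafilters\<close>

definition closed_subsemigroup :: "'a::plus filter set \<Rightarrow> bool" where
  "closed_subsemigroup S \<longleftrightarrow> ultrafilter_closed S \<and> (\<forall>p\<in>S. \<forall>q\<in>S. p \<oplus> q \<in> S)"

lemma closed_subsemigroup_minimal:
  assumes "closed_subsemigroup S" "S \<noteq> {}"
  obtains M where "M \<subseteq> S" "M \<noteq> {}" "closed_subsemigroup M"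
    "\<And>T. T \<subseteq> M \<Longrightarrow> T \<noteq> {} \<Longrightarrow> closed_subsemigroup T \<Longrightarrow> T = M"
proof -
  obtain M where "M \<subseteq> S" "M \<noteq> {} \<and> closed_subsemigroup M"
    and "\<And>T. T \<subseteq> M \<Longrightarrow> T \<noteq> {} \<and> closed_subsemigroup T \<Longrightarrow> T = M"
    by (rule ultrafilter_closed_minimal[where Q = "\<lambda>T. T \<noteq> {} \<and> closed_subsemigroup T"])
      (use assms in \<open>auto simp: closed_subsemigroup_def\<close>)
  then show ?thesis using that by blast
qed

text \<open>In a minimal closed subsemigroup \<open>M\<close> and for \<open>p \<in> M\<close>, both \<open>M \<oplus> p\<close> and
  \<open>{q \<in> M. q \<oplus> p = p}\<close> are closed subsemigroups, so both equal \<open>M\<close>.\<close>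

lemma closed_subsemigroup_idempotent:
  fixes S :: "'a::semigroup_add filter set"
  assumes "closed_subsemigroup S" "S \<noteq> {}"
  obtains e where "e \<in> S" "e \<oplus> e = e"
proof -
  obtain M where M: "M \<subseteq> S" "M \<noteq> {}" "closed_subsemigroup M"
    and minimal: "\<And>T. T \<subseteq> M \<Longrightarrow> T \<noteq> {} \<Longrightarrow> closed_subsemigroup T \<Longrightarrow> T = M"
    using closed_subsemigroup_minimal[OF assms] by blast
  have closed: "ultrafilter_closed M" and add: "\<And>p q. p \<in> M \<Longrightarrow> q \<in> M \<Longrightarrow> p \<oplus> q \<in> M"
    using M(3) by (auto simp: closed_subsemigroup_def)
  obtain p where p: "p \<in> M" using M(2) by blast
  have up: "ultrafilter p" using closed p by (rule ultrafilter_closed_imp_ultrafilter)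
  have "(\<lambda>q. q \<oplus> p) ` M = M"
  proof (rule minimal)
    show "closed_subsemigroup ((\<lambda>q. q \<oplus> p) ` M)"
      unfolding closed_subsemigroup_def
    proof (intro conjI ballI)
      show "ultrafilter_closed ((\<lambda>q. q \<oplus> p) ` M)" using closed up by (rule ultrafilter_closed_add_right)
      fix a b assume "a \<in> (\<lambda>q. q \<oplus> p) ` M" "b \<in> (\<lambda>q. q \<oplus> p) ` M"
      then obtain a' b' where "a' \<in> M" "b' \<in> M" "a = a' \<oplus> p" "b = b' \<oplus> p" by blast
      then show "a \<oplus> b \<in> (\<lambda>q. q \<oplus> p) ` M"
        using add p by (auto simp: filter_add_assoc intro!: image_eqI[of _ _ "a' \<oplus> (p \<oplus> b')"])
    qed
  qed (use add p M(2) in auto)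
  then obtain q where "q \<in> M" "q \<oplus> p = p" using p by (metis imageE)
  have "{q\<in>M. q \<oplus> p = p} = M"
  proof (rule minimal)
    show "closed_subsemigroup {q\<in>M. q \<oplus> p = p}"
      using closed up add by (auto simp: closed_subsemigroup_def filter_add_assoc
          intro: ultrafilter_closed_add_right_fixed)
  qed (use \<open>q \<in> M\<close> \<open>q \<oplus> p = p\<close> in auto)
  then have "p \<oplus> p = p" using p by blast
  with p M(1) show ?thesis using that by blast
qed

text \<open>Take an idempotent \<open>e \<in> H\<^sub>1\<close> and an idempotent \<open>f\<close> in the closed subsemigroup \<open>H\<^sub>2 \<oplus> e\<close>;
  then \<open>e \<oplus> f\<close> and \<open>f\<close> absorb each other.\<close>

lemma closed_right_ideals_absorbing_pair:
  fixes H :: "'a::semigroup_add filter set"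
  assumes H: "\<And>a b. a \<in> H \<Longrightarrow> b \<in> H \<Longrightarrow> a \<oplus> b \<in> H"
    and H\<^sub>1: "H\<^sub>1 \<subseteq> H" "H\<^sub>1 \<noteq> {}" "ultrafilter_closed H\<^sub>1" "\<And>a b. a \<in> H\<^sub>1 \<Longrightarrow> b \<in> H \<Longrightarrow> a \<oplus> b \<in> H\<^sub>1"
    and H\<^sub>2: "H\<^sub>2 \<subseteq> H" "H\<^sub>2 \<noteq> {}" "ultrafilter_closed H\<^sub>2" "\<And>a b. a \<in> H\<^sub>2 \<Longrightarrow> b \<in> H \<Longrightarrow> a \<oplus> b \<in> H\<^sub>2"
  obtains p q where "p \<in> H\<^sub>1" "q \<in> H\<^sub>2" "p \<oplus> q = p" "q \<oplus> p = q"
proof -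
  have "closed_subsemigroup H\<^sub>1" using H\<^sub>1 by (auto simp: closed_subsemigroup_def)
  then obtain e where e: "e \<in> H\<^sub>1" "e \<oplus> e = e"
    using closed_subsemigroup_idempotent H\<^sub>1(2) by blast
  have "ultrafilter e" using H\<^sub>1(3) e(1) by (rule ultrafilter_closed_imp_ultrafilter)
  have "closed_subsemigroup ((\<lambda>a. a \<oplus> e) ` H\<^sub>2)"
    unfolding closed_subsemigroup_def
  proof (intro conjI ballI)
    show "ultrafilter_closed ((\<lambda>a. a \<oplus> e) ` H\<^sub>2)"
      using H\<^sub>2(3) \<open>ultrafilter e\<close> by (rule ultrafilter_closed_add_right)
    fix a b assume "a \<in> (\<lambda>a. a \<oplus> e) ` H\<^sub>2" "b \<in> (\<lambda>a. a \<oplus> e) ` H\<^sub>2"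
    then obtain a' b' where ab: "a' \<in> H\<^sub>2" "b' \<in> H\<^sub>2" "a = a' \<oplus> e" "b = b' \<oplus> e" by blast
    then have "a' \<oplus> (e \<oplus> b') \<in> H\<^sub>2" using H H\<^sub>1(1) H\<^sub>2(1,4) e(1) by blast
    moreover have "a \<oplus> b = (a' \<oplus> (e \<oplus> b')) \<oplus> e" using ab by (simp add: filter_add_assoc)
    ultimately show "a \<oplus> b \<in> (\<lambda>a. a \<oplus> e) ` H\<^sub>2" by blast
  qed
  then obtain f where f: "f \<in> (\<lambda>a. a \<oplus> e) ` H\<^sub>2" "f \<oplus> f = f"
    using closed_subsemigroup_idempotent H\<^sub>2(2) by blast
  then obtain a where a: "a \<in> H\<^sub>2" "f = a \<oplus> e" by blast
  have "f \<in> H\<^sub>2" "f \<oplus> e = f" using a H\<^sub>1(1) H\<^sub>2(4) e by (auto simp: filter_add_assoc)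
  show ?thesis
  proof (rule that)
    show "e \<oplus> f \<in> H\<^sub>1" using H\<^sub>1(4) H\<^sub>2(1) e(1) \<open>f \<in> H\<^sub>2\<close> by blast
    show "f \<in> H\<^sub>2" by fact
    show "e \<oplus> f \<oplus> f = e \<oplus> f" using f(2) by (simp add: filter_add_assoc)
    show "f \<oplus> (e \<oplus> f) = f" using f(2) \<open>f \<oplus> e = f\<close> by (simp flip: filter_add_assoc)
  qed
qed

section \<open>Lowest digits and adic convergence\<close>

text \<open>For \<open>0 < d < b\<close>: the lowest nonzero digit of \<open>n\<close> in base \<open>b\<close> is \<open>d\<close>.\<close>

definition lowest_digit :: "int \<Rightarrow> int \<Rightarrow> int \<Rightarrow> bool" where
  "lowest_digit b d n \<longleftrightarrow> (\<exists>j. n mod b ^ Suc j = d * b ^ j)"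

lemma lowest_digit_add_multiple:
  assumes "lowest_digit b d n"
  obtains k where "\<And>m. b ^ k dvd m \<Longrightarrow> lowest_digit b d (n + m)"
proof -
  obtain j where j: "n mod b ^ Suc j = d * b ^ j" using assms by (auto simp: lowest_digit_def)
  have "lowest_digit b d (n + m)" if "b ^ Suc j dvd m" for m
  proof -
    have "(n + m) mod b ^ Suc j = n mod b ^ Suc j"
      using that by (metis add.right_neutral dvd_imp_mod_0 mod_add_right_eq)
    with j show ?thesis by (auto simp: lowest_digit_def)
  qed
  then show ?thesis using that by blast
qed

lemma lowest_digit_mult_power:
  assumes "0 \<le> d" "d < b"
  shows "lowest_digit b d (d * b ^ k)"
proof -
  have "d * b ^ k < b ^ Suc k" using assms by (simp add: mult_strict_right_mono)
  then have "d * b ^ k mod b ^ Suc k = d * b ^ k" using assms by (intro mod_pos_pos_trivial) simp_all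
  then show ?thesis unfolding lowest_digit_def by (rule exI)
qed

lemma lowest_digit_unique:
  assumes "lowest_digit b d n" "lowest_digit b d' n" "b \<noteq> 0" "d \<noteq> 0" "d' \<noteq> 0"
  shows "d = d'"
proof -
  have no_higher: False
    if "i < j" "n mod b ^ Suc i = c * b ^ i" "n mod b ^ Suc j = c' * b ^ j" "c \<noteq> 0" for i j c c'
  proof -
    have dvd_Suc: "b ^ Suc i dvd b ^ Suc j" by (rule le_imp_power_dvd) (use \<open>i < j\<close> in simp)
    have dvd: "b ^ Suc i dvd b ^ j" by (rule le_imp_power_dvd) (use \<open>i < j\<close> in simp)
    have "c * b ^ i = n mod b ^ Suc i" using that(2) by simp
    also have "\<dots> = n mod b ^ Suc j mod b ^ Suc i" by (rule mod_mod_cancel[OF dvd_Suc, symmetric])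
    also have "\<dots> = c' * b ^ j mod b ^ Suc i" by (simp only: that(3))
    also have "\<dots> = 0" by (intro dvd_imp_mod_0 dvd_mult dvd)
    finally show False using that(4) \<open>b \<noteq> 0\<close> by simp
  qed
  obtain i j where ij: "n mod b ^ Suc i = d * b ^ i" "n mod b ^ Suc j = d' * b ^ j"
    using assms(1,2) by (auto simp: lowest_digit_def)
  show ?thesis
  proof (cases i j rule: linorder_cases)
    case less
    then show ?thesis using no_higher[OF less ij assms(4)] by blast
  next
    case equal
    then have "d * b ^ i = d' * b ^ i" using ij by simp
    then show ?thesis using assms(3) by simp
  next
    case greater
    then show ?thesis using no_higher[OF greater ij(2,1) assms(5)] by blast
  qed
qed

text \<open>The neighbourhood filter of \<open>0\<close> in the \<open>b\<close>-adic topology.\<close>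

definition adic_zero :: "int \<Rightarrow> int filter" where
  "adic_zero b = (INF k. principal {n. b ^ k dvd n})"

lemma eventually_adic_zero: "eventually P (adic_zero b) \<longleftrightarrow> (\<exists>k. \<forall>n. b ^ k dvd n \<longrightarrow> P n)"
  unfolding adic_zero_def
proof (subst eventually_INF_base)
  fix i j :: nat
  show "\<exists>k\<in>UNIV. principal {n. b ^ k dvd n} \<le> inf (principal {n. b ^ i dvd n}) (principal {n. b ^ j dvd n})"
  proof (intro bexI[of _ "max i j"])
    have "b ^ i dvd b ^ max i j" "b ^ j dvd b ^ max i j" by (simp_all add: le_imp_power_dvd)
    then show "principal {n. b ^ max i j dvd n} \<le> inf (principal {n. b ^ i dvd n}) (principal {n. b ^ j dvd n})"
      by (auto intro: dvd_trans)
  qed simp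
qed (auto simp: eventually_principal)

lemma eventually_dvd_adic_zero: "F \<le> adic_zero b \<Longrightarrow> eventually (\<lambda>n. b ^ k dvd n) F"
  by (rule filter_leD) (auto simp: eventually_adic_zero)

lemma eventually_lowest_digit_add:
  assumes "F \<le> adic_zero b" "lowest_digit b d n"
  shows "eventually (\<lambda>m. lowest_digit b d (n + m)) F"
proof -
  obtain k where "\<And>m. b ^ k dvd m \<Longrightarrow> lowest_digit b d (n + m)"
    using lowest_digit_add_multiple[OF assms(2)] by blast
  then show ?thesis using eventually_dvd_adic_zero[OF assms(1), of k] by (auto elim: eventually_mono)
qed

lemma filter_add_le_adic_zero:
  assumes "F \<le> adic_zero b" "G \<le> adic_zero b"
  shows "F \<oplus> G \<le> adic_zero b"
proof (rule filter_leI)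
  fix P assume "eventually P (adic_zero b)"
  then obtain k where k: "\<And>n. b ^ k dvd n \<Longrightarrow> P n" by (auto simp: eventually_adic_zero)
  have "\<forall>\<^sub>F x in F. \<forall>\<^sub>F y in G. P (x + y)"
    using eventually_dvd_adic_zero[OF assms(1), of k]
  proof (rule eventually_mono)
    fix x assume "b ^ k dvd x"
    show "\<forall>\<^sub>F y in G. P (x + y)"
      using eventually_dvd_adic_zero[OF assms(2), of k] by (rule eventually_mono) (simp add: k \<open>b ^ k dvd x\<close>)
  qed
  then show "eventually P (F \<oplus> G)" by (simp add: eventually_filter_add)
qed

lemma filter_add_le_lowest_digit:
  assumes "F \<le> inf (adic_zero b) (principal {n. lowest_digit b d n})" "G \<le> adic_zero b"
  shows "F \<oplus> G \<le> inf (adic_zero b) (principal {n. lowest_digit b d n})"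
proof -
  have "F \<oplus> G \<le> adic_zero b" using assms by (intro filter_add_le_adic_zero) auto
  moreover have "eventually (\<lambda>n. lowest_digit b d n) F" using assms(1) by (auto simp: le_principal)
  then have "eventually (lowest_digit b d) (F \<oplus> G)"
    unfolding eventually_filter_add using eventually_lowest_digit_add[OF assms(2)]
    by (auto elim: eventually_mono)
  ultimately show ?thesis by (simp add: le_principal)
qed

lemma adic_zero_lowest_digit_ne_bot:
  assumes "0 \<le> d" "d < b"
  shows "inf (adic_zero b) (principal {n. lowest_digit b d n}) \<noteq> bot"
proof
  assume "inf (adic_zero b) (principal {n. lowest_digit b d n}) = bot"
  then obtain k where "\<And>n. b ^ k dvd n \<Longrightarrow> \<not> lowest_digit b d n"
    by (auto simp: trivial_limit_def eventually_inf_principal eventually_adic_zero)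
  with lowest_digit_mult_power[OF assms, of k] show False by simp
qed

lemma exists_absorbing_digit_ultrafilters:
  assumes "0 \<le> d\<^sub>1" "d\<^sub>1 < b" "0 \<le> d\<^sub>2" "d\<^sub>2 < b"
  obtains p q where "ultrafilter p" "ultrafilter q" "p \<le> adic_zero b" "q \<le> adic_zero b"
    "eventually (lowest_digit b d\<^sub>1) p" "eventually (lowest_digit b d\<^sub>2) q" "p \<oplus> q = p" "q \<oplus> p = q"
proof -
  define H where "H d = ultrafilters_below (inf (adic_zero b) (principal {n. lowest_digit b d n}))" for d
  have H_sub: "H d \<subseteq> ultrafilters_below (adic_zero b)" for d
    by (auto simp: H_def ultrafilters_below_def)
  have H_ideal: "a \<oplus> c \<in> H d" if "a \<in> H d" "c \<in> ultrafilters_below (adic_zero b)" for a c d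
    using that ultrafilter_filter_add filter_add_le_lowest_digit
    unfolding H_def ultrafilters_below_def mem_Collect_eq by blast
  have H_ne: "H d \<noteq> {}" if "0 \<le> d" "d < b" for d
    using adic_zero_lowest_digit_ne_bot[OF that] by (simp add: H_def ultrafilters_below_eq_empty_iff)
  obtain p q where "p \<in> H d\<^sub>1" "q \<in> H d\<^sub>2" "p \<oplus> q = p" "q \<oplus> p = q"
  proof (rule closed_right_ideals_absorbing_pair[of "ultrafilters_below (adic_zero b)" "H d\<^sub>1" "H d\<^sub>2"])
    show "a \<oplus> c \<in> ultrafilters_below (adic_zero b)"
      if "a \<in> ultrafilters_below (adic_zero b)" "c \<in> ultrafilters_below (adic_zero b)" for a c
      using that by (auto simp: ultrafilters_below_def ultrafilter_filter_add filter_add_le_adic_zero)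
  qed (use H_sub H_ideal H_ne assms in \<open>auto simp: H_def ultrafilter_closed_ultrafilters_below\<close>)
  then show ?thesis
    using that by (auto simp: H_def ultrafilters_below_def le_principal)
qed

section \<open>Translation limits along ultrafilters\<close>

lemma linf_iff_bounded: "x \<in> linf \<longleftrightarrow> bounded (range x)"
  by (simp add: linf_def bounded_iff)

lemma linf_translate: "x \<in> linf \<Longrightarrow> (\<lambda>m. x (n + m)) \<in> linf"
  by (auto simp: linf_def)

definition translate_Lim :: "int filter \<Rightarrow> (int \<Rightarrow> complex) \<Rightarrow> int \<Rightarrow> complex" where
  "translate_Lim p x n = Lim p (\<lambda>m. x (n + m))"

lemma tendsto_translate_Lim:
  "ultrafilter p \<Longrightarrow> x \<in> linf \<Longrightarrow> ((\<lambda>m. x (n + m)) \<longlongrightarrow> translate_Lim p x n) p"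
  unfolding translate_Lim_def by (rule tendsto_Lim_ultrafilter) (auto simp: linf_iff_bounded[symmetric] linf_translate)

lemma translate_Lim_eventually:
  "ultrafilter p \<Longrightarrow> eventually (\<lambda>m. x (n + m) = c) p \<Longrightarrow> translate_Lim p x n = c"
  unfolding translate_Lim_def by (rule Lim_ultrafilter[OF _ tendsto_eventually])

lemma translate_Lim_linf:
  assumes "ultrafilter p" "x \<in> linf"
  shows "translate_Lim p x \<in> linf"
proof -
  obtain M where "\<And>n. norm (x n) \<le> M" using assms(2) by (auto simp: linf_def)
  then have "norm (translate_Lim p x n) \<le> M" for n
    using assms by (intro Lim_norm_ubound[OF _ tendsto_translate_Lim]) (auto simp: ultrafilter_not_bot)
  then show ?thesis by (auto simp: linf_def)
qed

lemma translate_Lim_add: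
  "ultrafilter p \<Longrightarrow> x \<in> linf \<Longrightarrow> y \<in> linf \<Longrightarrow>
    translate_Lim p (\<lambda>n. x n + y n) n = translate_Lim p x n + translate_Lim p y n"
  by (unfold translate_Lim_def, rule Lim_ultrafilter)
    (auto intro: tendsto_add tendsto_translate_Lim[unfolded translate_Lim_def])

lemma translate_Lim_cmult:
  "ultrafilter p \<Longrightarrow> x \<in> linf \<Longrightarrow> translate_Lim p (\<lambda>n. c * x n) n = c * translate_Lim p x n"
  by (unfold translate_Lim_def, rule Lim_ultrafilter)
    (auto intro: tendsto_mult tendsto_translate_Lim[unfolded translate_Lim_def])

lemma translate_Lim_bshift: "translate_Lim p (bshift x) = bshift (translate_Lim p x)"
  by (simp add: translate_Lim_def bshift_def fun_eq_iff algebra_simps)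

lemma translate_Lim_translate_Lim:
  assumes "ultrafilter p" "ultrafilter q" "x \<in> linf"
  shows "translate_Lim p (translate_Lim q x) = translate_Lim (p \<oplus> q) x"
proof
  fix n
  have "Lim (p \<oplus> q) (\<lambda>m. x (n + m)) = Lim p (\<lambda>a. Lim q (\<lambda>b. x (n + (a + b))))"
    using assms by (simp add: Lim_filter_add linf_translate flip: linf_iff_bounded)
  then show "translate_Lim p (translate_Lim q x) n = translate_Lim (p \<oplus> q) x n"
    by (simp add: translate_Lim_def add.assoc)
qed

lemma translate_Lim_mat_pos:
  assumes "ultrafilter p" "\<forall>i<k. \<forall>j<k. x i j \<in> linf" "mat_pos k x"
  shows "mat_pos k (\<lambda>i j. translate_Lim p (x i j))"
  unfolding mat_pos_def
proof (intro allI)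
  fix n and v :: "nat \<Rightarrow> complex"
  define form where "form y m = (\<Sum>i<k. \<Sum>j<k. cnj (v i) * y i j m * v j)"
    for y :: "nat \<Rightarrow> nat \<Rightarrow> int \<Rightarrow> complex" and m
  have "((\<lambda>m. form x (n + m)) \<longlongrightarrow> form (\<lambda>i j. translate_Lim p (x i j)) n) p"
    unfolding form_def using assms(1,2)
    by (intro tendsto_sum tendsto_mult tendsto_const tendsto_translate_Lim) auto
  then have "form (\<lambda>i j. translate_Lim p (x i j)) n \<in> {z. Im z = 0 \<and> 0 \<le> Re z}"
    using assms(1,3)
    by (intro Lim_in_closed_set[of _ "\<lambda>m. form x (n + m)"] closed_Collect_conj
        closed_Collect_eq closed_Collect_le continuous_intros)
      (auto simp: form_def mat_pos_def ultrafilter_not_bot)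
  then show "Im (form (\<lambda>i j. translate_Lim p (x i j)) n) = 0 \<and> 0 \<le> Re (form (\<lambda>i j. translate_Lim p (x i j)) n)"
    by simp
qed

lemma mat_pos_midpoint:
  assumes "mat_pos k x" "mat_pos k y"
  shows "mat_pos k (\<lambda>i j n. (x i j n + y i j n) / 2)"
  unfolding mat_pos_def
proof (intro allI)
  fix n and v :: "nat \<Rightarrow> complex"
  define form where "form z = (\<Sum>i<k. \<Sum>j<k. cnj (v i) * z i j n * v j)"
    for z :: "nat \<Rightarrow> nat \<Rightarrow> int \<Rightarrow> complex"
  have "Im (form x) = 0" "0 \<le> Re (form x)" "Im (form y) = 0" "0 \<le> Re (form y)"
    using assms unfolding mat_pos_def form_def by blast+
  moreover have midpoint: "form (\<lambda>i j n. (x i j n + y i j n) / 2) = (form x + form y) / 2"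
    unfolding form_def by (simp add: sum.distrib ring_distribs add_divide_distrib flip: sum_divide_distrib)
  ultimately show "Im (form (\<lambda>i j n. (x i j n + y i j n) / 2)) = 0 \<and>
      0 \<le> Re (form (\<lambda>i j n. (x i j n + y i j n) / 2))"
    unfolding midpoint by simp
qed

lemma linf_midpoint:
  assumes "x \<in> linf" "y \<in> linf"
  shows "(\<lambda>n. (x n + y n) / 2) \<in> linf"
proof -
  obtain M N where "\<And>n. norm (x n) \<le> M" "\<And>n. norm (y n) \<le> N" using assms by (auto simp: linf_def)
  then have "norm ((x n + y n) / 2) \<le> (M + N) / 2" for n
    by (simp add: norm_divide divide_right_mono norm_triangle_le add_mono)
  then show ?thesis unfolding linf_def by blast
qed

definition translate_Lim_mean :: "int filter \<Rightarrow> int filter \<Rightarrow> (int \<Rightarrow> complex) \<Rightarrow> int \<Rightarrow> complex" where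
  "translate_Lim_mean p q x n = (translate_Lim p x n + translate_Lim q x n) / 2"

lemma linear_on_linf_translate_Lim_mean:
  assumes "ultrafilter p" "ultrafilter q"
  shows "linear_on_linf (translate_Lim_mean p q)"
  unfolding linear_on_linf_def
proof (intro conjI ballI allI)
  fix x assume "x \<in> linf"
  then show "translate_Lim_mean p q x \<in> linf"
    unfolding translate_Lim_mean_def using assms by (intro linf_midpoint translate_Lim_linf)
next
  fix x y assume "x \<in> linf" "y \<in> linf"
  then show "translate_Lim_mean p q (\<lambda>n. x n + y n) = (\<lambda>n. translate_Lim_mean p q x n + translate_Lim_mean p q y n)"
    using assms by (simp add: fun_eq_iff translate_Lim_mean_def translate_Lim_add add_divide_distrib)
next
  fix c :: complex and x assume "x \<in> linf"
  then show "translate_Lim_mean p q (\<lambda>n. c * x n) = (\<lambda>n. c * translate_Lim_mean p q x n)"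
    using assms by (simp add: fun_eq_iff translate_Lim_mean_def translate_Lim_cmult ring_distribs)
qed

lemma translate_Lim_const: "ultrafilter p \<Longrightarrow> translate_Lim p (\<lambda>n. c) = (\<lambda>n. c)"
  by (intro ext translate_Lim_eventually) simp_all

lemma translate_Lim_mean_const: "ultrafilter p \<Longrightarrow> ultrafilter q \<Longrightarrow> translate_Lim_mean p q (\<lambda>n. c) = (\<lambda>n. c)"
  by (simp add: fun_eq_iff translate_Lim_mean_def translate_Lim_const)

lemma completely_positive_translate_Lim_mean:
  assumes "ultrafilter p" "ultrafilter q"
  shows "completely_positive (translate_Lim_mean p q)"
  unfolding completely_positive_def translate_Lim_mean_def
  using assms by (auto intro!: mat_pos_midpoint translate_Lim_mat_pos)

lemma translate_Lim_mean_bshift: "translate_Lim_mean p q (bshift x) = bshift (translate_Lim_mean p q x)"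
  unfolding translate_Lim_mean_def translate_Lim_bshift by (simp add: bshift_def)

lemma translate_Lim_translate_Lim_mean:
  assumes "ultrafilter r" "ultrafilter p" "ultrafilter q" "x \<in> linf"
  shows "translate_Lim r (translate_Lim_mean p q x) n = (translate_Lim (r \<oplus> p) x n + translate_Lim (r \<oplus> q) x n) / 2"
proof -
  have "((\<lambda>m. translate_Lim_mean p q x (n + m)) \<longlongrightarrow>
      (translate_Lim r (translate_Lim p x) n + translate_Lim r (translate_Lim q x) n) / 2) r"
    unfolding translate_Lim_mean_def using assms
    by (intro tendsto_divide tendsto_add tendsto_const tendsto_translate_Lim translate_Lim_linf) auto
  then show ?thesis
    using assms by (simp add: translate_Lim_def[of r "translate_Lim_mean p q x"] Lim_ultrafilter
        translate_Lim_translate_Lim)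
qed

lemma translate_Lim_mean_idempotent:
  assumes p: "ultrafilter p" and q: "ultrafilter q" and pq: "p \<oplus> q = p" and qp: "q \<oplus> p = q"
    and x: "x \<in> linf"
  shows "translate_Lim_mean p q (translate_Lim_mean p q x) = translate_Lim_mean p q x"
proof -
  have "p \<oplus> p = p" by (metis filter_add_assoc pq qp)
  moreover have "q \<oplus> q = q" by (metis filter_add_assoc pq qp)
  ultimately show ?thesis
    using assms by (simp add: fun_eq_iff translate_Lim_mean_def[of p q "translate_Lim_mean p q x"]
        translate_Lim_translate_Lim_mean) (simp add: translate_Lim_mean_def)
qed

lemma translate_Lim_eq_on_digit:
  assumes "ultrafilter r" "eventually (\<lambda>m. lowest_digit b d (n + m)) r"
    and "\<And>m. lowest_digit b d m \<Longrightarrow> x m = c"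
  shows "translate_Lim r x n = c"
proof (rule translate_Lim_eventually[OF assms(1)])
  show "eventually (\<lambda>m. x (n + m) = c) r" using assms(2) by (rule eventually_mono) (rule assms(3))
qed

lemma translate_Lim_mean_digit_values:
  assumes p: "ultrafilter p" "p \<le> adic_zero b" "eventually (lowest_digit b d\<^sub>1) p"
    and q: "ultrafilter q" "q \<le> adic_zero b" "eventually (lowest_digit b d\<^sub>2) q"
    and x: "\<And>n. lowest_digit b d\<^sub>1 n \<Longrightarrow> x n = 1" "\<And>n. lowest_digit b d\<^sub>2 n \<Longrightarrow> x n = 0"
  shows "lowest_digit b d\<^sub>1 n \<Longrightarrow> translate_Lim_mean p q x n = 1"
    and "lowest_digit b d\<^sub>2 n \<Longrightarrow> translate_Lim_mean p q x n = 0"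
    and "translate_Lim_mean p q x 0 = 1 / 2"
proof -
  have "translate_Lim r x n = 1" if "lowest_digit b d\<^sub>1 n" "r \<in> {p, q}" for r n
    using that p(1,2) q(1,2) x by (auto intro: translate_Lim_eq_on_digit eventually_lowest_digit_add)
  moreover have "translate_Lim r x n = 0" if "lowest_digit b d\<^sub>2 n" "r \<in> {p, q}" for r n
    using that p(1,2) q(1,2) x by (auto intro: translate_Lim_eq_on_digit eventually_lowest_digit_add)
  moreover have "translate_Lim p x 0 = 1" "translate_Lim q x 0 = 0"
    using p(1,3) q(1,3) x by (auto intro: translate_Lim_eq_on_digit)
  ultimately show "lowest_digit b d\<^sub>1 n \<Longrightarrow> translate_Lim_mean p q x n = 1"
    and "lowest_digit b d\<^sub>2 n \<Longrightarrow> translate_Lim_mean p q x n = 0"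
    and "translate_Lim_mean p q x 0 = 1 / 2"
    by (simp_all add: translate_Lim_mean_def)
qed

lemma translate_Lim_mean_not_cstar_subalgebra:
  assumes p: "ultrafilter p" "p \<le> adic_zero b" "eventually (lowest_digit b d\<^sub>1) p"
    and q: "ultrafilter q" "q \<le> adic_zero b" "eventually (lowest_digit b d\<^sub>2) q"
    and pq: "p \<oplus> q = p" "q \<oplus> p = q"
    and digits: "b \<noteq> 0" "d\<^sub>1 \<noteq> 0" "d\<^sub>2 \<noteq> 0" "d\<^sub>1 \<noteq> d\<^sub>2"
  shows "\<not> cstar_subalgebra (translate_Lim_mean p q ` linf)"
proof
  assume cstar: "cstar_subalgebra (translate_Lim_mean p q ` linf)"
  define \<Phi> where "\<Phi> = translate_Lim_mean p q"
  define separates where "separates x \<longleftrightarrow>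
    (\<forall>n. lowest_digit b d\<^sub>1 n \<longrightarrow> x n = 1) \<and> (\<forall>n. lowest_digit b d\<^sub>2 n \<longrightarrow> x n = 0)" for x :: "int \<Rightarrow> complex"
  have separates_\<Phi>: "separates (\<Phi> x) \<and> \<Phi> x 0 = 1 / 2" if "separates x" for x
    using translate_Lim_mean_digit_values[OF p q, of x] that by (auto simp: \<Phi>_def separates_def)
  define indicator where "indicator n = (if lowest_digit b d\<^sub>1 n then 1 else 0 :: complex)" for n
  define y where "y = \<Phi> indicator"
  have "indicator \<in> linf" by (auto simp: indicator_def linf_def intro!: exI[of _ 1])
  then have y_range: "y \<in> \<Phi> ` linf" by (simp add: y_def)
  have "separates indicator"
    using lowest_digit_unique digits by (auto simp: separates_def indicator_def)
  then have y: "separates y" "y 0 = 1 / 2" using separates_\<Phi> by (auto simp: y_def)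
  obtain z where "z \<in> linf" "(\<lambda>n. y n * y n) = \<Phi> z"
    using cstar y_range unfolding cstar_subalgebra_def \<Phi>_def by blast
  then have "\<Phi> (\<lambda>n. y n * y n) = (\<lambda>n. y n * y n)"
    using translate_Lim_mean_idempotent[OF p(1) q(1) pq] by (simp add: \<Phi>_def)
  moreover have "separates (\<lambda>n. y n * y n)" using y(1) by (simp add: separates_def)
  ultimately have "y 0 * y 0 = 1 / 2" using separates_\<Phi> by metis
  then show False unfolding y(2) by simp
qed

theorem theorem2p15:
  shows "\<exists>\<Phi> :: (int \<Rightarrow> complex) \<Rightarrow> (int \<Rightarrow> complex).
    linear_on_linf \<Phi> \<and>
    \<Phi> (\<lambda>n. 1) = (\<lambda>n. 1) \<and>
    completely_positive \<Phi> \<and>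
    (\<forall>x\<in>linf. \<Phi> (\<Phi> x) = \<Phi> x) \<and>
    (\<forall>x\<in>linf. \<Phi> (bshift x) = bshift (\<Phi> x)) \<and>
    \<not> cstar_subalgebra (\<Phi> ` linf)"
proof -
  obtain p q where p: "ultrafilter p" "p \<le> adic_zero 3" "eventually (lowest_digit 3 1) p"
    and q: "ultrafilter q" "q \<le> adic_zero 3" "eventually (lowest_digit 3 2) q"
    and pq: "p \<oplus> q = p" "q \<oplus> p = q"
    by (rule exists_absorbing_digit_ultrafilters[of 1 3 2]) auto
  show ?thesis
  proof (intro exI conjI ballI)
    show "linear_on_linf (translate_Lim_mean p q)"
      using p(1) q(1) by (rule linear_on_linf_translate_Lim_mean)
    show "translate_Lim_mean p q (\<lambda>n. 1) = (\<lambda>n. 1)"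
      using p(1) q(1) by (rule translate_Lim_mean_const)
    show "completely_positive (translate_Lim_mean p q)"
      using p(1) q(1) by (rule completely_positive_translate_Lim_mean)
    show "translate_Lim_mean p q (translate_Lim_mean p q x) = translate_Lim_mean p q x" if "x \<in> linf" for x
      using p(1) q(1) pq that by (rule translate_Lim_mean_idempotent)
    show "translate_Lim_mean p q (bshift x) = bshift (translate_Lim_mean p q x)" for x
      by (rule translate_Lim_mean_bshift)
    show "\<not> cstar_subalgebra (translate_Lim_mean p q ` linf)"
      using p q pq by (rule translate_Lim_mean_not_cstar_subalgebra) simp_all
  qed
qed

end
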